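(* Let $r>1$ be an integer and let $M$ be the sub-add move matrix. For every $0\le i\le 2r-1$ and every vertex $(2^{\lfloor i/2\rfloor}x,2^{\lfloor i/2\rfloor}y)\in\mathcal P_i$ (with $x,y$ integers), the vertex $(2^{\lfloor i/2\rfloor}(x-y),2^{\lfloor i/2\rfloor}(x+y))\in\mathcal P_{i+1}$ has exactly two parents in $\Gamma_{M,\,2^r}$.
   Context: The sub-add move matrix is $M=\begin{pmatrix}1&-1\\1&1\end{pmatrix}$. For $n\in\mathbb N$, $\Gamma_{M,\,n}$ is the directed graph with vertex set $\mathbb Z_n^2$ and arcs $((a,b),(a-b,a+b))$ for all $(a,b)\in\mathbb Z_n^2$ (computed mod $n$; loops allowed). If $({\bf v},{\bf w})$ is an arc, ${\bf v}$ is a parent of ${\bf w}$ (in particular $(0,0)$ is a parent of itself). For $n=2^r$: for $0\le t\le r-1$, $\mathcal P_{2t}$ is the set of pairs $(2^tx,2^ty)\in\mathbb Z_{2^r}^2$ with $x,y$ integers exactly one of which is odd, and $\mathcal P_{2t+1}$ is the set of pairs $(2^tx,2^ty)$ with $x,y$ both odd; $\mathcal P_{2r}=\{(0,0)\}$. These sets partition $\mathbb Z_{2^r}^2$. *)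

theory Defs
  imports Main
begin

text \<open>Z_n^2 represented by pairs of integers in {0..<n}; all arithmetic taken mod n.\<close>

definition vertices :: "int \<Rightarrow> (int \<times> int) set" where
  "vertices n = {(a, b). 0 \<le> a \<and> a < n \<and> 0 \<le> b \<and> b < n}"

text \<open>Sub-add move matrix M = [[1,-1],[1,1]] acting mod n.\<close>
definition submove :: "int \<Rightarrow> int \<times> int \<Rightarrow> int \<times> int" where
  "submove n v = ((fst v - snd v) mod n, (fst v + snd v) mod n)"

definition is_arc :: "int \<Rightarrow> int \<times> int \<Rightarrow> int \<times> int \<Rightarrow> bool" where
  "is_arc n v w \<longleftrightarrow> v \<in> vertices n \<and> w = submove n v"

definition parents :: "int \<Rightarrow> int \<times> int \<Rightarrow> (int \<times> int) set" where
  "parents n w = {v. is_arc n v w}"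

definition Pclass :: "nat \<Rightarrow> nat \<Rightarrow> (int \<times> int) set" where
  "Pclass r i =
     (if i = 2 * r then {(0, 0)}
      else if i < 2 * r then
        (if even i then
           {((2 ^ (i div 2) * x) mod 2 ^ r, (2 ^ (i div 2) * y) mod 2 ^ r) | x y :: int.
              odd x \<noteq> odd y}
         else
           {((2 ^ (i div 2) * x) mod 2 ^ r, (2 ^ (i div 2) * y) mod 2 ^ r) | x y :: int.
              odd x \<and> odd y})
      else {})"

end

theory Submission
  imports Defs
begin

text \<open>Modulo an even n = 2h the sub-add map is linear with kernel {(0,0), (h,h)}: from
  d \<equiv> e and d + e \<equiv> 0 one gets 2d \<equiv> 0, so d \<equiv> 0 or d \<equiv> h. Hence every vertex in the image
  of the move has exactly the two parents v and v + (h,h). For the classes, a vertex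
  (2^t x, 2^t y) with t < r determines the parities of x and y; the move sends a pair with
  exactly one odd coordinate to a pair of odd coordinates at the same scale, and a pair of odd
  coordinates to (2^(t+1) a, 2^(t+1) b) with a + b = x odd, i.e. to the next class.\<close>

lemma sub_add_kernel_even_modulus:
  fixes n d e :: int
  assumes "even n" "n > 0" "n dvd d - e" "n dvd d + e"
  shows "e mod n = d mod n \<and> (d mod n = 0 \<or> d mod n = n div 2)"
proof
  show "e mod n = d mod n"
    using assms(3) by (metis mod_eq_dvd_iff dvd_diff_commute)
  obtain h where n: "n = 2 * h"
    using assms(1) by blast
  have "n dvd (d - e) + (d + e)"
    using assms(3,4) by (rule dvd_add)
  then have "h dvd d"
    by (simp add: n)
  then obtain k where "d = h * k" ..
  moreover have "n = h * 2"
    using n by simp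
  ultimately have "d mod n = h * (k mod 2)"
    by (simp only: mult_mod_right)
  moreover have "k mod 2 = 0 \<or> k mod 2 = 1"
    by auto
  ultimately show "d mod n = 0 \<or> d mod n = n div 2"
    by (auto simp: n)
qed

lemma submove_add_half:
  fixes n a b :: int
  assumes "even n"
  shows "submove n ((a + n div 2) mod n, (b + n div 2) mod n) = submove n (a, b)"
proof -
  have "(a + n div 2) + (b + n div 2) = a + b + n"
    using assms by simp
  then show ?thesis
    by (simp add: submove_def mod_diff_eq mod_add_eq)
qed

lemma parents_submove:
  fixes n a b :: int
  assumes "even n" "n > 0" "(a, b) \<in> vertices n"
  shows "parents n (submove n (a, b)) = {(a, b), ((a + n div 2) mod n, (b + n div 2) mod n)}"
proof (intro equalityI subsetI)
  fix v
  assume "v \<in> parents n (submove n (a, b))"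
  then obtain c d where v: "v = (c, d)" and cd: "(c, d) \<in> vertices n"
    and "(c - d) mod n = (a - b) mod n" "(c + d) mod n = (a + b) mod n"
    by (cases v) (auto simp: parents_def is_arc_def submove_def)
  then have "n dvd (c - a) - (d - b)" "n dvd (c - a) + (d - b)"
    by (simp_all add: mod_eq_dvd_iff algebra_simps)
  then have "(d - b) mod n = (c - a) mod n"
    and "(c - a) mod n = 0 \<or> (c - a) mod n = n div 2"
    using sub_add_kernel_even_modulus assms(1,2) by blast+
  moreover have "c = (a + (c - a) mod n) mod n" "d = (b + (d - b) mod n) mod n"
    using cd by (simp_all add: vertices_def mod_add_right_eq)
  moreover have "a mod n = a" "b mod n = b"
    using assms(3) by (simp_all add: vertices_def)
  ultimately show "v \<in> {(a, b), ((a + n div 2) mod n, (b + n div 2) mod n)}"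
    using v by auto
next
  fix v
  assume "v \<in> {(a, b), ((a + n div 2) mod n, (b + n div 2) mod n)}"
  then show "v \<in> parents n (submove n (a, b))"
    using assms submove_add_half[of n a b]
    by (auto simp: parents_def is_arc_def vertices_def)
qed

lemma card_parents_submove:
  fixes n :: int
  assumes "even n" "n > 0" "v \<in> vertices n"
  shows "card (parents n (submove n v)) = 2"
proof -
  obtain a b where v: "v = (a, b)"
    by fastforce
  have "(a + n div 2) mod n \<noteq> a"
  proof
    assume "(a + n div 2) mod n = a"
    then have "(a + n div 2) mod n = a mod n"
      using assms(3) v by (simp add: vertices_def)
    then have "n dvd n div 2"
      by (simp add: mod_eq_dvd_iff)
    then show False
      using assms(1,2) zdvd_imp_le[of n "n div 2"] by auto
  qed
  then show ?thesis
    using parents_submove[OF assms(1,2)] assms(3) v by simp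
qed

lemma odd_iff_if_scaled_mod_eq:
  fixes x x' :: int and t r :: nat
  assumes "t < r" "(2 ^ t * x) mod 2 ^ r = (2 ^ t * x') mod 2 ^ r"
  shows "odd x \<longleftrightarrow> odd x'"
proof -
  have "(2::int) ^ Suc t dvd 2 ^ r"
    using assms(1) by (intro le_imp_power_dvd) simp
  moreover have "(2::int) ^ r dvd 2 ^ t * (x - x')"
    using assms(2) by (simp add: mod_eq_dvd_iff right_diff_distrib)
  ultimately have "(2::int) ^ t * 2 dvd 2 ^ t * (x - x')"
    by (metis dvd_trans power_Suc2)
  then have "2 dvd x - x'"
    by simp
  then show ?thesis
    by auto
qed

lemma scaled_pair_in_Pclass_iff:
  fixes r i :: nat and x y :: int
  assumes "i < 2 * r"
  shows "((2 ^ (i div 2) * x) mod 2 ^ r, (2 ^ (i div 2) * y) mod 2 ^ r) \<in> Pclass r i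
     \<longleftrightarrow> (if even i then odd x \<noteq> odd y else odd x \<and> odd y)"
    (is "?pair \<in> _ \<longleftrightarrow> ?parity x y")
proof
  assume "?pair \<in> Pclass r i"
  then obtain x' y' where "?parity x' y'"
    and x': "(2 ^ (i div 2) * x) mod 2 ^ r = (2 ^ (i div 2) * x') mod 2 ^ r"
    and y': "(2 ^ (i div 2) * y) mod 2 ^ r = (2 ^ (i div 2) * y') mod 2 ^ r"
    using assms by (auto simp: Pclass_def split: if_splits)
  moreover have "i div 2 < r"
    using assms by linarith
  ultimately show "?parity x y"
    using odd_iff_if_scaled_mod_eq[OF _ x'] odd_iff_if_scaled_mod_eq[OF _ y'] by (simp split: if_splits)
next
  assume "?parity x y"
  then show "?pair \<in> Pclass r i"
    using assms by (auto simp: Pclass_def) blast+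
qed

lemma submove_scaled_pair_in_next_Pclass:
  fixes r i :: nat and x y :: int
  assumes "i < 2 * r"
    and "((2 ^ (i div 2) * x) mod 2 ^ r, (2 ^ (i div 2) * y) mod 2 ^ r) \<in> Pclass r i"
  shows "((2 ^ (i div 2) * (x - y)) mod 2 ^ r, (2 ^ (i div 2) * (x + y)) mod 2 ^ r)
           \<in> Pclass r (i + 1)"
proof (cases "even i")
  case True
  then have "odd x \<noteq> odd y" "(i + 1) div 2 = i div 2" "i + 1 < 2 * r"
    using assms scaled_pair_in_Pclass_iff by auto
  then show ?thesis
    using True scaled_pair_in_Pclass_iff[of "i + 1" r "x - y" "x + y"] by auto
next
  case False
  define t where "t = i div 2"
  have xy: "odd x" "odd y"
    using False assms scaled_pair_in_Pclass_iff by auto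
  have next_index: "even (i + 1)" "(i + 1) div 2 = Suc t"
    using False by (simp_all add: t_def)
  obtain a b where ab: "x - y = 2 * a" "x + y = 2 * b"
    using xy by (metis even_add even_diff evenE)
  then have "x = a + b"
    by linarith
  then have "odd a \<noteq> odd b"
    using xy by auto
  have scale: "2 ^ t * (x - y) = 2 ^ Suc t * a" "2 ^ t * (x + y) = 2 ^ Suc t * b"
    using ab by simp_all
  have "((2 ^ Suc t * a) mod 2 ^ r, (2 ^ Suc t * b) mod 2 ^ r) \<in> Pclass r (i + 1)"
  proof (cases "i + 1 = 2 * r")
    case True
    then have "Suc t = r"
      using next_index by simp
    then show ?thesis
      using True by (simp add: Pclass_def)
  next
    case False
    then show ?thesis
      using assms(1) next_index \<open>odd a \<noteq> odd b\<close> scaled_pair_in_Pclass_iff[of "i + 1" r a b]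
      by simp
  qed
  then show ?thesis
    by (simp only: t_def[symmetric] scale)
qed

theorem proposition5p4:
  fixes r i :: nat and x y :: int
  assumes "r > 1"
    and "i \<le> 2 * r - 1"
    and "((2 ^ (i div 2) * x) mod 2 ^ r, (2 ^ (i div 2) * y) mod 2 ^ r) \<in> Pclass r i"
  shows "((2 ^ (i div 2) * (x - y)) mod 2 ^ r, (2 ^ (i div 2) * (x + y)) mod 2 ^ r)
           \<in> Pclass r (i + 1)
         \<and> card (parents (2 ^ r)
              ((2 ^ (i div 2) * (x - y)) mod 2 ^ r, (2 ^ (i div 2) * (x + y)) mod 2 ^ r)) = 2"
proof
  show "((2 ^ (i div 2) * (x - y)) mod 2 ^ r, (2 ^ (i div 2) * (x + y)) mod 2 ^ r)
          \<in> Pclass r (i + 1)"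
    using assms by (intro submove_scaled_pair_in_next_Pclass) auto
  have "((2 ^ (i div 2) * (x - y)) mod 2 ^ r, (2 ^ (i div 2) * (x + y)) mod 2 ^ r)
     = submove (2 ^ r) ((2 ^ (i div 2) * x) mod 2 ^ r, (2 ^ (i div 2) * y) mod 2 ^ r)"
    by (simp add: submove_def mod_diff_eq mod_add_eq right_diff_distrib distrib_left)
  moreover have "even ((2::int) ^ r)"
    using assms(1) by simp
  ultimately show "card (parents (2 ^ r)
      ((2 ^ (i div 2) * (x - y)) mod 2 ^ r, (2 ^ (i div 2) * (x + y)) mod 2 ^ r)) = 2"
    by (simp add: card_parents_submove vertices_def)
qed

end
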